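(* Let $(q,E)$ be an annotated CQ for which there exists a CQ $q'$ that fits $E$ with $q\subseteq q'$. Then there is, up to equivalence, exactly one $\preceq^{\mathrm{cod}}$-generalization for $(q,E)$.
   Context: An annotated CQ $(q,E)$ consists of a $k$-ary conjunctive query $q$ (relational atoms, no constants, every answer variable occurring in an atom) and a collection $E=(E^+,E^-)$ of labeled data examples of arity $k$, where a data example is $(I,\mathbf a)$ with $I$ a finite instance and $\mathbf a$ a $k$-tuple of its values. $[\![q]\!]$ is the set of data examples $(I,\mathbf a)$ with $\mathbf a\in q(I)$; $q$ fits $E$ if $E^+\subseteq[\![q]\!]$ and $E^-\cap[\![q]\!]=\emptyset$; $\subseteq$ is query containment and $\equiv$ equivalence. $q_1\preceq^{\mathrm{cod}}_q q_2$ iff $[\![q]\!]\oplus[\![q_1]\!]\subseteq[\![q]\!]\oplus[\![q_2]\!]$ ($\oplus$ = symmetric difference), $\prec_q$ its strict part. A $\preceq^{\mathrm{cod}}$-generalization for $(q,E)$ is a CQ $q'$ fitting $E$ with $q\subseteq q'$ such that no CQ $q''$ fitting $E$ with $q\subseteq q''$ has $q''\prec^{\mathrm{cod}}_q q'$. Candidate queries range over CQs using only the relation symbols occurring in $q$ and $E$. *)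

theory Defs
  imports Main
begin

type_synonym 'r fact = "'r \<times> nat list"
type_synonym 'r inst = "'r fact set"
type_synonym 'r dexample = "'r inst \<times> nat list"

type_synonym 'r cq = "nat list \<times> 'r fact set"

definition ans :: "'r cq \<Rightarrow> nat list" where "ans q = fst q"
definition body :: "'r cq \<Rightarrow> 'r fact set" where "body q = snd q"

definition adom :: "'r inst \<Rightarrow> nat set" where
  "adom I = (\<Union>(R, xs)\<in>I. set xs)"

definition rels :: "'r fact set \<Rightarrow> 'r set" where
  "rels A = fst ` A"

definition wf_inst :: "('r \<Rightarrow> nat) \<Rightarrow> 'r inst \<Rightarrow> bool" where
  "wf_inst ar I \<longleftrightarrow> finite I \<and> (\<forall>(R, xs)\<in>I. length xs = ar R)"

definition wf_cq :: "('r \<Rightarrow> nat) \<Rightarrow> nat \<Rightarrow> 'r cq \<Rightarrow> bool" where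
  "wf_cq ar k q \<longleftrightarrow> length (ans q) = k \<and> finite (body q)
     \<and> (\<forall>(R, xs)\<in>body q. length xs = ar R) \<and> set (ans q) \<subseteq> adom (body q)"

definition data_example :: "('r \<Rightarrow> nat) \<Rightarrow> nat \<Rightarrow> 'r dexample \<Rightarrow> bool" where
  "data_example ar k e \<longleftrightarrow> wf_inst ar (fst e) \<and> length (snd e) = k \<and> set (snd e) \<subseteq> adom (fst e)"

definition answers :: "'r cq \<Rightarrow> 'r inst \<Rightarrow> nat list set" where
  "answers q I = {map h (ans q) | h. \<forall>(R, xs)\<in>body q. (R, map h xs) \<in> I}"

definition sem :: "('r \<Rightarrow> nat) \<Rightarrow> nat \<Rightarrow> 'r cq \<Rightarrow> 'r dexample set" where
  "sem ar k q = {e. data_example ar k e \<and> snd e \<in> answers q (fst e)}"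

definition fits :: "('r \<Rightarrow> nat) \<Rightarrow> nat \<Rightarrow> 'r cq \<Rightarrow> 'r dexample set \<times> 'r dexample set \<Rightarrow> bool" where
  "fits ar k q E \<longleftrightarrow> fst E \<subseteq> sem ar k q \<and> snd E \<inter> sem ar k q = {}"

definition cq_contained :: "('r \<Rightarrow> nat) \<Rightarrow> nat \<Rightarrow> 'r cq \<Rightarrow> 'r cq \<Rightarrow> bool" where
  "cq_contained ar k q1 q2 \<longleftrightarrow> sem ar k q1 \<subseteq> sem ar k q2"

definition cq_equiv :: "('r \<Rightarrow> nat) \<Rightarrow> nat \<Rightarrow> 'r cq \<Rightarrow> 'r cq \<Rightarrow> bool" where
  "cq_equiv ar k q1 q2 \<longleftrightarrow> sem ar k q1 = sem ar k q2"

definition symdiff :: "'a set \<Rightarrow> 'a set \<Rightarrow> 'a set" where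
  "symdiff A B = (A - B) \<union> (B - A)"

definition cod_le :: "('r \<Rightarrow> nat) \<Rightarrow> nat \<Rightarrow> 'r cq \<Rightarrow> 'r cq \<Rightarrow> 'r cq \<Rightarrow> bool" where
  "cod_le ar k q q1 q2 \<longleftrightarrow> symdiff (sem ar k q) (sem ar k q1) \<subseteq> symdiff (sem ar k q) (sem ar k q2)"

definition cod_less :: "('r \<Rightarrow> nat) \<Rightarrow> nat \<Rightarrow> 'r cq \<Rightarrow> 'r cq \<Rightarrow> 'r cq \<Rightarrow> bool" where
  "cod_less ar k q q1 q2 \<longleftrightarrow> cod_le ar k q q1 q2 \<and> \<not> cod_le ar k q q2 q1"

definition sig :: "'r cq \<Rightarrow> 'r dexample set \<times> 'r dexample set \<Rightarrow> 'r set" where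
  "sig q E = rels (body q) \<union> (\<Union>e\<in>fst E \<union> snd E. rels (fst e))"

definition candidate :: "('r \<Rightarrow> nat) \<Rightarrow> nat \<Rightarrow> 'r cq \<Rightarrow> 'r dexample set \<times> 'r dexample set \<Rightarrow> 'r cq \<Rightarrow> bool" where
  "candidate ar k q E q' \<longleftrightarrow> wf_cq ar k q' \<and> rels (body q') \<subseteq> sig q E"

definition cod_generalization ::
  "('r \<Rightarrow> nat) \<Rightarrow> nat \<Rightarrow> 'r cq \<Rightarrow> 'r dexample set \<times> 'r dexample set \<Rightarrow> 'r cq \<Rightarrow> bool" where
  "cod_generalization ar k q E q' \<longleftrightarrow>
     candidate ar k q E q' \<and> fits ar k q' E \<and> cq_contained ar k q q' \<and>
     \<not> (\<exists>q''. candidate ar k q E q'' \<and> fits ar k q'' E \<and> cq_contained ar k q q''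
             \<and> cod_less ar k q q'' q')"

definition annotated_cq :: "('r \<Rightarrow> nat) \<Rightarrow> nat \<Rightarrow> 'r cq \<Rightarrow> 'r dexample set \<times> 'r dexample set \<Rightarrow> bool" where
  "annotated_cq ar k q E \<longleftrightarrow> wf_cq ar k q \<and> finite (fst E) \<and> finite (snd E)
     \<and> (\<forall>e\<in>fst E \<union> snd E. data_example ar k e)"

end

theory Submission
  imports Defs "HOL-Library.Nat_Bijection"
begin

text \<open>
  Read the body of \<open>q\<close>, pointed by its answer tuple, as a data example and take its direct
  product \<open>P\<close> with all positive examples. A pointed instance maps into \<open>P\<close> iff it maps into
  \<open>q\<close> and into every positive example, so by the homomorphism characterisation of containment
  \<open>P\<close>, read back as a CQ, is the least CQ that contains \<open>q\<close> and accepts the positive examples.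
  It is contained in the assumed fitting CQ and hence rejects the negative examples. Among CQs
  containing \<open>q\<close>, the order \<open>cod_le\<close> is just containment, so this least fitting CQ is the
  unique \<open>cod_le\<close>-generalization up to equivalence.
\<close>

definition homomorphic :: "'r dexample \<Rightarrow> 'r dexample \<Rightarrow> bool" where
  "homomorphic e1 e2 \<longleftrightarrow>
     (\<exists>h. (\<forall>(R, xs)\<in>fst e1. (R, map h xs) \<in> fst e2) \<and> map h (snd e1) = snd e2)"

definition canonical :: "'r cq \<Rightarrow> 'r dexample" where
  "canonical q = (body q, ans q)"

definition cq_of :: "'r dexample \<Rightarrow> 'r cq" where
  "cq_of e = (snd e, fst e)"

lemma body_cq_of [simp]: "body (cq_of e) = fst e"
  and ans_cq_of [simp]: "ans (cq_of e) = snd e"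
  by (simp_all add: cq_of_def body_def ans_def)

lemma canonical_cq_of [simp]: "canonical (cq_of e) = e"
  by (simp add: canonical_def)

lemma homomorphic_refl: "homomorphic e e"
  unfolding homomorphic_def by (rule exI[of _ id]) auto

lemma homomorphic_trans:
  assumes "homomorphic e1 e2" "homomorphic e2 e3"
  shows "homomorphic e1 e3"
proof -
  obtain g where g: "\<forall>(R, xs)\<in>fst e1. (R, map g xs) \<in> fst e2" "map g (snd e1) = snd e2"
    using assms(1) unfolding homomorphic_def by blast
  obtain h where h: "\<forall>(R, xs)\<in>fst e2. (R, map h xs) \<in> fst e3" "map h (snd e2) = snd e3"
    using assms(2) unfolding homomorphic_def by blast
  have "\<forall>(R, xs)\<in>fst e1. (R, map (h \<circ> g) xs) \<in> fst e3"
    using g(1) h(1) by fastforce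
  moreover have "map (h \<circ> g) (snd e1) = snd e3"
    unfolding map_map[symmetric] g(2) h(2) ..
  ultimately show ?thesis
    unfolding homomorphic_def by blast
qed

lemma homomorphic_snd_in_adom:
  assumes "homomorphic e1 e2" "set (snd e1) \<subseteq> adom (fst e1)"
  shows "set (snd e2) \<subseteq> adom (fst e2)"
proof
  fix y assume "y \<in> set (snd e2)"
  obtain h where h: "\<forall>(R, xs)\<in>fst e1. (R, map h xs) \<in> fst e2" "map h (snd e1) = snd e2"
    using assms(1) unfolding homomorphic_def by blast
  obtain x where "x \<in> set (snd e1)" "y = h x"
    using \<open>y \<in> set (snd e2)\<close> unfolding h(2)[symmetric] by auto
  then obtain R xs where "(R, xs) \<in> fst e1" "x \<in> set xs" "y = h x"
    using assms(2) unfolding adom_def by auto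
  then show "y \<in> adom (fst e2)"
    using h(1) unfolding adom_def by force
qed

definition prod_example :: "'r dexample \<Rightarrow> 'r dexample \<Rightarrow> 'r dexample" where
  "prod_example e1 e2 =
     ({(R, map prod_encode (zip xs ys)) | R xs ys.
         (R, xs) \<in> fst e1 \<and> (R, ys) \<in> fst e2 \<and> length xs = length ys},
      map prod_encode (zip (snd e1) (snd e2)))"

lemma homomorphic_prod_example_fst:
  assumes "length (snd e1) = length (snd e2)"
  shows "homomorphic (prod_example e1 e2) e1"
  unfolding homomorphic_def
proof (intro exI conjI)
  show "\<forall>(R, xs)\<in>fst (prod_example e1 e2). (R, map (fst \<circ> prod_decode) xs) \<in> fst e1"
    by (auto simp: prod_example_def comp_def)
  show "map (fst \<circ> prod_decode) (snd (prod_example e1 e2)) = snd e1"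
    using assms by (simp add: prod_example_def comp_def)
qed

lemma homomorphic_prod_example_snd:
  assumes "length (snd e1) = length (snd e2)"
  shows "homomorphic (prod_example e1 e2) e2"
  unfolding homomorphic_def
proof (intro exI conjI)
  show "\<forall>(R, xs)\<in>fst (prod_example e1 e2). (R, map (snd \<circ> prod_decode) xs) \<in> fst e2"
    by (auto simp: prod_example_def comp_def)
  show "map (snd \<circ> prod_decode) (snd (prod_example e1 e2)) = snd e2"
    using assms by (simp add: prod_example_def comp_def)
qed

lemma homomorphic_prod_exampleI:
  assumes "homomorphic c e1" "homomorphic c e2"
  shows "homomorphic c (prod_example e1 e2)"
proof -
  obtain g1 where g1: "\<forall>(R, xs)\<in>fst c. (R, map g1 xs) \<in> fst e1" "map g1 (snd c) = snd e1"
    using assms(1) unfolding homomorphic_def by blast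
  obtain g2 where g2: "\<forall>(R, xs)\<in>fst c. (R, map g2 xs) \<in> fst e2" "map g2 (snd c) = snd e2"
    using assms(2) unfolding homomorphic_def by blast
  define h where "h v = prod_encode (g1 v, g2 v)" for v
  have map_h: "map h xs = map prod_encode (zip (map g1 xs) (map g2 xs))" for xs
    by (induction xs) (simp_all add: h_def)
  have "\<forall>(R, xs)\<in>fst c. (R, map h xs) \<in> fst (prod_example e1 e2)"
    using g1(1) g2(1) unfolding map_h prod_example_def by fastforce
  moreover have "map h (snd c) = snd (prod_example e1 e2)"
    unfolding map_h g1(2) g2(2) prod_example_def by simp
  ultimately show ?thesis
    unfolding homomorphic_def by blast
qed

lemma homomorphic_prod_example_iff:
  assumes "length (snd e1) = length (snd e2)"
  shows "homomorphic c (prod_example e1 e2) \<longleftrightarrow> homomorphic c e1 \<and> homomorphic c e2"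
  using homomorphic_trans homomorphic_prod_example_fst[OF assms]
    homomorphic_prod_example_snd[OF assms] homomorphic_prod_exampleI by blast

lemma length_snd_foldl_prod_example:
  assumes "\<forall>e'\<in>set es. length (snd e') = length (snd e)"
  shows "length (snd (foldl prod_example e es)) = length (snd e)"
  using assms by (induction es arbitrary: e) (auto simp: prod_example_def)

lemma homomorphic_foldl_prod_example_iff:
  assumes "\<forall>e'\<in>set es. length (snd e') = length (snd e)"
  shows "homomorphic c (foldl prod_example e es) \<longleftrightarrow>
           homomorphic c e \<and> (\<forall>e'\<in>set es. homomorphic c e')"
  using assms
proof (induction es arbitrary: e)
  case Nil
  then show ?case by simp
next
  case (Cons e' es)
  have "length (snd (prod_example e e')) = length (snd e)"
    using Cons.prems by (simp add: prod_example_def)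
  then have "homomorphic c (foldl prod_example (prod_example e e') es) \<longleftrightarrow>
               homomorphic c (prod_example e e') \<and> (\<forall>e''\<in>set es. homomorphic c e'')"
    using Cons by (intro Cons.IH) simp
  also have "\<dots> \<longleftrightarrow> homomorphic c e \<and> (\<forall>e''\<in>set (e' # es). homomorphic c e'')"
    using Cons.prems by (auto simp: homomorphic_prod_example_iff)
  finally show ?case by simp
qed

lemma rels_foldl_prod_example: "rels (fst (foldl prod_example e es)) \<subseteq> rels (fst e)"
proof (induction es arbitrary: e)
  case (Cons e' es)
  have "rels (fst (prod_example e e')) \<subseteq> rels (fst e)"
    unfolding rels_def prod_example_def by force
  then show ?case
    using Cons.IH by (metis foldl_Cons subset_trans)
qed simp

lemma arity_foldl_prod_example:
  assumes "\<forall>(R, xs)\<in>fst e. length xs = ar R"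
  shows "\<forall>(R, xs)\<in>fst (foldl prod_example e es). length xs = ar R"
  using assms
proof (induction es arbitrary: e)
  case (Cons e' es)
  have "\<forall>(R, xs)\<in>fst (prod_example e e'). length xs = ar R"
    using Cons.prems by (auto simp: prod_example_def)
  then show ?case
    using Cons.IH by simp
qed simp

lemma finite_foldl_prod_example:
  assumes "finite (fst e)" "\<forall>e'\<in>set es. finite (fst e')"
  shows "finite (fst (foldl prod_example e es))"
  using assms
proof (induction es arbitrary: e)
  case (Cons e' es)
  have "fst (prod_example e e') \<subseteq>
          (\<lambda>((R, xs), (S, ys)). (R, map prod_encode (zip xs ys))) ` (fst e \<times> fst e')"
    unfolding prod_example_def by force
  then have "finite (fst (prod_example e e'))"
    using Cons.prems by (auto intro: finite_subset)
  then show ?case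
    using Cons by simp
qed simp

lemma mem_sem_iff_homomorphic:
  "e \<in> sem ar k q \<longleftrightarrow> data_example ar k e \<and> homomorphic (canonical q) e"
  unfolding sem_def answers_def homomorphic_def canonical_def by (auto; metis)

lemma canonical_in_sem:
  assumes "wf_cq ar k q"
  shows "canonical q \<in> sem ar k q"
proof -
  have "data_example ar k (canonical q)"
    using assms unfolding data_example_def wf_cq_def wf_inst_def canonical_def by auto
  then show ?thesis
    by (simp add: mem_sem_iff_homomorphic homomorphic_refl)
qed

lemma cq_contained_iff_homomorphic:
  assumes "wf_cq ar k q1"
  shows "cq_contained ar k q1 q2 \<longleftrightarrow> homomorphic (canonical q2) (canonical q1)"
proof
  assume "cq_contained ar k q1 q2"
  then have "canonical q1 \<in> sem ar k q2"
    using canonical_in_sem[OF assms] unfolding cq_contained_def by blast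
  then show "homomorphic (canonical q2) (canonical q1)"
    by (simp add: mem_sem_iff_homomorphic)
next
  assume "homomorphic (canonical q2) (canonical q1)"
  then show "cq_contained ar k q1 q2"
    unfolding cq_contained_def by (auto simp: mem_sem_iff_homomorphic intro: homomorphic_trans)
qed

definition product_cq :: "'r cq \<Rightarrow> 'r dexample list \<Rightarrow> 'r cq" where
  "product_cq q es = cq_of (foldl prod_example (canonical q) es)"

lemma homomorphic_product_cq_iff:
  assumes "wf_cq ar k q" "\<forall>e\<in>set es. data_example ar k e"
  shows "homomorphic c (canonical (product_cq q es)) \<longleftrightarrow>
           homomorphic c (canonical q) \<and> (\<forall>e\<in>set es. homomorphic c e)"
proof -
  have "\<forall>e\<in>set es. length (snd e) = length (snd (canonical q))"
    using assms unfolding data_example_def wf_cq_def canonical_def by auto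
  then show ?thesis
    unfolding product_cq_def canonical_cq_of by (rule homomorphic_foldl_prod_example_iff)
qed

lemma rels_product_cq: "rels (body (product_cq q es)) \<subseteq> rels (body q)"
  using rels_foldl_prod_example unfolding product_cq_def canonical_def by fastforce

text \<open>The answer values of a product need not occur in its facts; a well-formed CQ mapping
  into the product rules this out.\<close>

lemma wf_cq_product_cq:
  assumes "wf_cq ar k q" "\<forall>e\<in>set es. data_example ar k e"
    and "wf_cq ar k q0" "homomorphic (canonical q0) (canonical (product_cq q es))"
  shows "wf_cq ar k (product_cq q es)"
  unfolding wf_cq_def
proof (intro conjI)
  have "\<forall>e\<in>set es. length (snd e) = length (snd (canonical q))"
    using assms(1,2) unfolding data_example_def wf_cq_def canonical_def by auto
  then show "length (ans (product_cq q es)) = k"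
    using length_snd_foldl_prod_example assms(1)
    unfolding product_cq_def wf_cq_def canonical_def by fastforce
  show "finite (body (product_cq q es))"
    using finite_foldl_prod_example[of "canonical q" es] assms(1,2)
    unfolding product_cq_def wf_cq_def canonical_def data_example_def wf_inst_def by simp
  show "\<forall>(R, xs)\<in>body (product_cq q es). length xs = ar R"
    using arity_foldl_prod_example assms(1)
    unfolding product_cq_def wf_cq_def canonical_def by fastforce
  show "set (ans (product_cq q es)) \<subseteq> adom (body (product_cq q es))"
    using homomorphic_snd_in_adom[OF assms(4)] assms(3)
    unfolding wf_cq_def canonical_def by simp
qed

lemma least_fitting_cq_containing:
  assumes "annotated_cq ar k q E"
    and "wf_cq ar k q0" "fits ar k q0 E" "cq_contained ar k q q0"
  obtains Q where "candidate ar k q E Q" "fits ar k Q E" "cq_contained ar k q Q"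
    and "\<And>q'. wf_cq ar k q' \<Longrightarrow> fits ar k q' E \<Longrightarrow> cq_contained ar k q q' \<Longrightarrow>
           cq_contained ar k Q q'"
proof -
  have q: "wf_cq ar k q" and positives: "\<forall>e\<in>fst E. data_example ar k e"
    using assms(1) unfolding annotated_cq_def by auto
  obtain es where es: "set es = fst E"
    using assms(1) finite_list unfolding annotated_cq_def by blast
  then have es_examples: "\<forall>e\<in>set es. data_example ar k e"
    using positives by simp
  define Q where "Q = product_cq q es"
  have hom_into_Q: "homomorphic c (canonical Q) \<longleftrightarrow>
      homomorphic c (canonical q) \<and> (\<forall>e\<in>fst E. homomorphic c e)" for c
    unfolding Q_def es[symmetric] using q es_examples by (rule homomorphic_product_cq_iff)
  have hom_from_fitting: "homomorphic (canonical q') (canonical Q)"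
    if "fits ar k q' E" "cq_contained ar k q q'" for q'
    using that hom_into_Q cq_contained_iff_homomorphic[OF q]
    unfolding fits_def by (auto simp: mem_sem_iff_homomorphic)
  have projections:
    "homomorphic (canonical Q) (canonical q) \<and> (\<forall>e\<in>fst E. homomorphic (canonical Q) e)"
    using homomorphic_refl[of "canonical Q"] unfolding hom_into_Q .
  have "wf_cq ar k Q"
    using wf_cq_product_cq[OF q es_examples assms(2)] hom_from_fitting[OF assms(3,4)]
    unfolding Q_def .
  then have "candidate ar k q E Q"
    using rels_product_cq unfolding candidate_def sig_def Q_def by fastforce
  moreover have least: "cq_contained ar k Q q'"
    if "fits ar k q' E" "cq_contained ar k q q'" for q'
    using hom_from_fitting[OF that] cq_contained_iff_homomorphic[OF \<open>wf_cq ar k Q\<close>] by blast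
  moreover have "fits ar k Q E"
  proof -
    have "fst E \<subseteq> sem ar k Q"
      using positives projections by (auto simp: mem_sem_iff_homomorphic)
    moreover have "sem ar k Q \<subseteq> sem ar k q0"
      using least[OF assms(3,4)] unfolding cq_contained_def .
    ultimately show ?thesis
      using assms(3) unfolding fits_def by blast
  qed
  moreover have "cq_contained ar k q Q"
    using projections cq_contained_iff_homomorphic[OF q] by blast
  ultimately show ?thesis
    using that by blast
qed

lemma cod_le_iff_cq_contained:
  assumes "cq_contained ar k q q1" "cq_contained ar k q q2"
  shows "cod_le ar k q q1 q2 \<longleftrightarrow> cq_contained ar k q1 q2"
  using assms unfolding cod_le_def cq_contained_def symdiff_def by blast

lemma least_fitting_cq_is_unique_cod_generalization:
  assumes "candidate ar k q E Q" "fits ar k Q E" "cq_contained ar k q Q"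
    and least: "\<And>q'. candidate ar k q E q' \<Longrightarrow> fits ar k q' E \<Longrightarrow> cq_contained ar k q q' \<Longrightarrow>
                  cq_contained ar k Q q'"
  shows "cod_generalization ar k q E Q"
    and "cod_generalization ar k q E q' \<Longrightarrow> cq_equiv ar k q' Q"
proof -
  have Q_below: "cod_le ar k q Q q'"
    if "candidate ar k q E q'" "fits ar k q' E" "cq_contained ar k q q'" for q'
    using least[OF that] cod_le_iff_cq_contained[OF assms(3) that(3)] by blast
  then show "cod_generalization ar k q E Q"
    using assms(1-3) unfolding cod_generalization_def cod_less_def by blast
  assume "cod_generalization ar k q E q'"
  then have q': "candidate ar k q E q'" "fits ar k q' E" "cq_contained ar k q q'"
    and "\<not> cod_less ar k q Q q'"
    using assms(1-3) unfolding cod_generalization_def by blast+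
  then have "cod_le ar k q q' Q"
    using Q_below unfolding cod_less_def by blast
  then show "cq_equiv ar k q' Q"
    using least[OF q'] cod_le_iff_cq_contained[OF q'(3) assms(3)]
    unfolding cq_contained_def cq_equiv_def by blast
qed

theorem corollary9:
  fixes ar :: "'r \<Rightarrow> nat" and k :: nat and q :: "'r cq"
    and E :: "'r dexample set \<times> 'r dexample set"
  assumes "annotated_cq ar k q E"
    and "\<exists>q'. wf_cq ar k q' \<and> fits ar k q' E \<and> cq_contained ar k q q'"
  shows "\<exists>q'. cod_generalization ar k q E q'
           \<and> (\<forall>q''. cod_generalization ar k q E q'' \<longrightarrow> cq_equiv ar k q'' q')"
proof -
  obtain q0 where "wf_cq ar k q0" "fits ar k q0 E" "cq_contained ar k q q0"
    using assms(2) by blast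
  then obtain Q where Q: "candidate ar k q E Q" "fits ar k Q E" "cq_contained ar k q Q"
    and least: "\<And>q'. wf_cq ar k q' \<Longrightarrow> fits ar k q' E \<Longrightarrow> cq_contained ar k q q' \<Longrightarrow>
                  cq_contained ar k Q q'"
    using least_fitting_cq_containing[OF assms(1)] by blast
  have "\<And>q'. candidate ar k q E q' \<Longrightarrow> fits ar k q' E \<Longrightarrow> cq_contained ar k q q' \<Longrightarrow>
          cq_contained ar k Q q'"
    using least unfolding candidate_def by blast
  then show ?thesis
    using least_fitting_cq_is_unique_cod_generalization[OF Q] by blast
qed

end
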